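(* Let $m\ge 1$ and let $\Delta_{m-1}=\{\alpha\in\mathbb{R}^m:\alpha_i\ge 0,\ \sum_{i=1}^m\alpha_i=1\}$. For each $i\in\{1,\dots,m\}$ let $g_i(x,y)\in\mathbb{R}^d$ (defined for all inputs $x$ and targets $y$) be the input gradient of the loss of the model using only tool $i$, and for $\alpha\in\Delta_{m-1}$ let $g_\alpha(x,y)=\nabla_x\mathcal{J}_\alpha(x,y)$ be the input gradient of the soft-composed loss $\mathcal{J}_\alpha$. Define the gradient alignment coefficient $$\rho_g=\max\Big\{0,\ \sup_{i\neq j}\ \sup_{(x,y)}\ \cos\big(g_i(x,y),g_j(x,y)\big)\Big\}\in[0,1].$$ Assume (bounded gradients) there is $G\ge 0$ with $\|g_i(x,y)\|_2\le G$ for all $i$ and all $(x,y)$, and (linear aggregation with bounded residual) for every $\alpha\in\Delta_{m-1}$ and all $(x,y)$, $$g_\alpha(x,y)=\sum_{i=1}^m\alpha_i g_i(x,y)+\xi_\alpha(x,y)\quad\text{with}\quad\|\xi_\alpha(x,y)\|_2\le\delta_g .$$ Then for every $\alpha\in\Delta_{m-1}$ and all $(x,y)$, $$\|g_\alpha(x,y)\|_2\le G\sqrt{\rho_g+(1-\rho_g)\|\alpha\|_2^2}+\delta_g .$$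
   Context: Setting: a base LLM with parameters $\theta$ and $m$ tools, tool $i$ being represented by a parameter increment $\Delta\theta_i$. For aggregation weights $\alpha$ in the probability simplex, $\mathcal{J}_\alpha(x,y)$ is the loss of the model with parameters $\theta+\sum_i\alpha_i\Delta\theta_i$ on input context $x$ (viewed as a vector in $\mathbb{R}^d$) and target action $y$; $g_i$ is the input gradient of the loss of the model with parameters $\theta+\Delta\theta_i$. $\cos(u,v)=\langle u,v\rangle/(\|u\|_2\|v\|_2)$. *)

theory Defs
  imports "HOL-Analysis.Analysis"
begin

definition prob_simplex :: "('m::finite \<Rightarrow> real) set" where
  "prob_simplex = {\<alpha>. (\<forall>i. 0 \<le> \<alpha> i) \<and> (\<Sum>i\<in>UNIV. \<alpha> i) = 1}"

definition cosine :: "'a::real_inner \<Rightarrow> 'a \<Rightarrow> real" where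
  "cosine u v = inner u v / (norm u * norm v)"

text \<open>Gradient alignment coefficient
  rho_g = max {0, sup_{i \<noteq> j} sup_{(x,y)} cos(g_i(x,y), g_j(x,y))},
  with the convention sup of the empty set (m = 1) contributing nothing, i.e. rho_g = 0.\<close>
definition grad_align :: "('m \<Rightarrow> 'x \<Rightarrow> 'y \<Rightarrow> 'v::real_inner) \<Rightarrow> real" where
  "grad_align g =
     (let S = {cosine (g i x y) (g j x y) | i j x y. i \<noteq> j}
      in if S = {} then 0 else max 0 (Sup S))"

text \<open>Vertex e_i of the simplex (aggregation using only tool i).\<close>
definition vertex :: "'m \<Rightarrow> 'm \<Rightarrow> real" where
  "vertex i = (\<lambda>j. if j = i then 1 else 0)"

end

theory Submission
  imports Defs
begin

text \<open>Expanding the square of the aggregated gradient gives a double sum of inner products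
  \<open>\<alpha>\<^sub>i \<alpha>\<^sub>j \<langle>g\<^sub>i, g\<^sub>j\<rangle>\<close>. The diagonal terms are at most \<open>G\<^sup>2\<close>, and off the diagonal
  \<open>\<langle>g\<^sub>i, g\<^sub>j\<rangle> = cos(g\<^sub>i, g\<^sub>j) \<parallel>g\<^sub>i\<parallel> \<parallel>g\<^sub>j\<parallel> \<le> \<rho>\<^sub>g G\<^sup>2\<close>. Summing with \<open>\<Sum> \<alpha>\<^sub>i = 1\<close> bounds the
  square of the linear part by \<open>G\<^sup>2 (\<rho>\<^sub>g + (1 - \<rho>\<^sub>g) \<parallel>\<alpha>\<parallel>\<^sup>2)\<close>; the residual adds at most \<open>\<delta>\<^sub>g\<close>
  by the triangle inequality.\<close>

lemma cosine_le_1: "cosine u v \<le> 1"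
proof (cases "norm u * norm v = 0")
  case True
  then show ?thesis by (auto simp: cosine_def)
next
  case False
  then have "0 < norm u * norm v" by (simp add: less_le)
  with norm_cauchy_schwarz[of u v] show ?thesis by (simp add: cosine_def)
qed

lemma inner_le_cosine_bound:
  fixes u v :: "'a::real_inner"
  assumes "cosine u v \<le> r" "0 \<le> r" "norm u \<le> G" "norm v \<le> G"
  shows "inner u v \<le> r * G\<^sup>2"
proof (cases "u = 0 \<or> v = 0")
  case True
  then show ?thesis using assms(2) by auto
next
  case False
  then have "inner u v = cosine u v * (norm u * norm v)" by (simp add: cosine_def)
  also have "\<dots> \<le> r * (norm u * norm v)"
    using assms(1) by (intro mult_right_mono) auto
  also have "\<dots> \<le> r * G\<^sup>2"
    using assms(2-4) order_trans[OF norm_ge_zero assms(3)]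
    by (auto simp: power2_eq_square intro!: mult_left_mono mult_mono)
  finally show ?thesis .
qed

lemma grad_align_nonneg: "0 \<le> grad_align g"
  by (simp add: grad_align_def Let_def)

lemma grad_align_le_1: "grad_align g \<le> 1"
proof -
  define S where "S = {cosine (g i x y) (g j x y) | i j x y. i \<noteq> j}"
  have "grad_align g = (if S = {} then 0 else max 0 (Sup S))"
    unfolding grad_align_def Let_def S_def by (rule refl)
  moreover have "S \<noteq> {} \<Longrightarrow> Sup S \<le> 1"
    by (rule cSup_least) (auto simp: S_def cosine_le_1)
  ultimately show ?thesis by auto
qed

lemma cosine_le_grad_align:
  assumes "i \<noteq> j"
  shows "cosine (g i x y) (g j x y) \<le> grad_align g"
proof -
  define S where "S = {cosine (g i x y) (g j x y) | i j x y. i \<noteq> j}"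
  have mem: "cosine (g i x y) (g j x y) \<in> S" using assms unfolding S_def by blast
  have "bdd_above S" unfolding S_def bdd_above_def using cosine_le_1 by blast
  with mem have "cosine (g i x y) (g j x y) \<le> Sup S" by (rule cSup_upper)
  moreover have "grad_align g = (if S = {} then 0 else max 0 (Sup S))"
    unfolding grad_align_def Let_def S_def by (rule refl)
  then have "grad_align g = max 0 (Sup S)" using mem by auto
  ultimately show ?thesis by linarith
qed

lemma norm_sum_scaleR_squared:
  fixes v :: "'i \<Rightarrow> 'a::real_inner"
  shows "(norm (\<Sum>i\<in>I. a i *\<^sub>R v i))\<^sup>2 = (\<Sum>i\<in>I. \<Sum>j\<in>I. a i * a j * inner (v i) (v j))"
  by (simp add: power2_norm_eq_inner inner_sum_left inner_sum_right sum_distrib_left mult.assoc)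
    (simp add: inner_commute)

lemma norm_sum_scaleR_squared_le:
  fixes v :: "'i \<Rightarrow> 'a::real_inner"
  assumes "finite I" "\<And>i. i \<in> I \<Longrightarrow> 0 \<le> a i"
    and norm_le: "\<And>i. i \<in> I \<Longrightarrow> norm (v i) \<le> G"
    and inner_le: "\<And>i j. i \<in> I \<Longrightarrow> j \<in> I \<Longrightarrow> i \<noteq> j \<Longrightarrow> inner (v i) (v j) \<le> r * G\<^sup>2"
  shows "(norm (\<Sum>i\<in>I. a i *\<^sub>R v i))\<^sup>2
           \<le> r * G\<^sup>2 * (\<Sum>i\<in>I. a i)\<^sup>2 + (1 - r) * G\<^sup>2 * (\<Sum>i\<in>I. (a i)\<^sup>2)"
proof -
  define c where "c i j = r * G\<^sup>2 + (if i = j then (1 - r) * G\<^sup>2 else 0)" for i j :: 'i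
  have inner_le_c: "inner (v i) (v j) \<le> c i j" if "i \<in> I" "j \<in> I" for i j
  proof (cases "i = j")
    case True
    have "inner (v i) (v i) = (norm (v i))\<^sup>2" by (simp add: power2_norm_eq_inner)
    also have "\<dots> \<le> G\<^sup>2" using norm_le[OF that(1)] by (intro power_mono) auto
    finally show ?thesis using True by (simp add: c_def algebra_simps)
  qed (use inner_le that in \<open>simp add: c_def\<close>)
  have "(norm (\<Sum>i\<in>I. a i *\<^sub>R v i))\<^sup>2 = (\<Sum>i\<in>I. \<Sum>j\<in>I. a i * a j * inner (v i) (v j))"
    by (rule norm_sum_scaleR_squared)
  also have "\<dots> \<le> (\<Sum>i\<in>I. \<Sum>j\<in>I. a i * a j * c i j)"
    using assms(2) by (intro sum_mono mult_left_mono inner_le_c) auto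
  also have "\<dots> = (\<Sum>i\<in>I. \<Sum>j\<in>I. r * G\<^sup>2 * (a i * a j))
                  + (\<Sum>i\<in>I. \<Sum>j\<in>I. if i = j then (1 - r) * G\<^sup>2 * (a i * a j) else 0)"
    by (auto simp: c_def sum.distrib[symmetric] algebra_simps intro!: sum.cong)
  also have "\<dots> = r * G\<^sup>2 * (\<Sum>i\<in>I. a i)\<^sup>2 + (1 - r) * G\<^sup>2 * (\<Sum>i\<in>I. (a i)\<^sup>2)"
  proof -
    have "(\<Sum>i\<in>I. \<Sum>j\<in>I. r * G\<^sup>2 * (a i * a j)) = r * G\<^sup>2 * (\<Sum>i\<in>I. a i)\<^sup>2"
      unfolding power2_eq_square sum_product by (simp add: sum_distrib_left)
    moreover have "(\<Sum>i\<in>I. \<Sum>j\<in>I. if i = j then (1 - r) * G\<^sup>2 * (a i * a j) else 0)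
                     = (1 - r) * G\<^sup>2 * (\<Sum>i\<in>I. (a i)\<^sup>2)"
      using assms(1) by (simp add: power2_eq_square sum_distrib_left)
    ultimately show ?thesis by simp
  qed
  finally show ?thesis .
qed

lemma norm_convex_comb_le:
  fixes v :: "'m::finite \<Rightarrow> 'a::real_inner"
  assumes "\<alpha> \<in> prob_simplex" "0 \<le> r" "r \<le> 1"
    and "\<And>i. norm (v i) \<le> G" "0 \<le> G"
    and "\<And>i j. i \<noteq> j \<Longrightarrow> inner (v i) (v j) \<le> r * G\<^sup>2"
  shows "norm (\<Sum>i\<in>UNIV. \<alpha> i *\<^sub>R v i) \<le> G * sqrt (r + (1 - r) * (\<Sum>i\<in>UNIV. (\<alpha> i)\<^sup>2))"
proof -
  have weights: "\<And>i. 0 \<le> \<alpha> i" "(\<Sum>i\<in>UNIV. \<alpha> i) = 1"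
    using assms(1) by (auto simp: prob_simplex_def)
  have nonneg: "0 \<le> r + (1 - r) * (\<Sum>i\<in>UNIV. (\<alpha> i)\<^sup>2)"
    using assms(2,3) by (simp add: sum_nonneg)
  then have "(G * sqrt (r + (1 - r) * (\<Sum>i\<in>UNIV. (\<alpha> i)\<^sup>2)))\<^sup>2
               = r * G\<^sup>2 * (\<Sum>i\<in>UNIV. \<alpha> i)\<^sup>2 + (1 - r) * G\<^sup>2 * (\<Sum>i\<in>UNIV. (\<alpha> i)\<^sup>2)"
    by (simp add: power_mult_distrib weights algebra_simps)
  with norm_sum_scaleR_squared_le[of UNIV \<alpha> v G r] assms(4,6) weights(1)
  have "(norm (\<Sum>i\<in>UNIV. \<alpha> i *\<^sub>R v i))\<^sup>2 \<le> (G * sqrt (r + (1 - r) * (\<Sum>i\<in>UNIV. (\<alpha> i)\<^sup>2)))\<^sup>2"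
    by simp
  then show ?thesis by (rule power2_le_imp_le) (simp add: assms(5) nonneg)
qed

theorem theorem3p6:
  fixes J :: "('m::finite \<Rightarrow> real) \<Rightarrow> real ^ 'd \<Rightarrow> 'y \<Rightarrow> real"
    and g :: "'m \<Rightarrow> real ^ 'd \<Rightarrow> 'y \<Rightarrow> real ^ 'd"
    and g_agg :: "('m \<Rightarrow> real) \<Rightarrow> real ^ 'd \<Rightarrow> 'y \<Rightarrow> real ^ 'd"
    and G \<delta>g :: real
  assumes grad_i: "\<And>i x y. ((\<lambda>x'. J (vertex i) x' y) has_derivative (\<lambda>h. g i x y \<bullet> h)) (at x)"
    and grad_agg: "\<And>\<alpha> x y. \<alpha> \<in> prob_simplex \<Longrightarrow>
           ((\<lambda>x'. J \<alpha> x' y) has_derivative (\<lambda>h. g_agg \<alpha> x y \<bullet> h)) (at x)"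
    and G_nonneg: "0 \<le> G"
    and bounded: "\<And>i x y. norm (g i x y) \<le> G"
    and linear_agg: "\<And>\<alpha> x y. \<alpha> \<in> prob_simplex \<Longrightarrow>
           \<exists>\<xi>. g_agg \<alpha> x y = (\<Sum>i\<in>UNIV. \<alpha> i *\<^sub>R g i x y) + \<xi> \<and> norm \<xi> \<le> \<delta>g"
    and alpha: "\<alpha> \<in> prob_simplex"
  shows "norm (g_agg \<alpha> x y)
           \<le> G * sqrt (grad_align g + (1 - grad_align g) * (\<Sum>i\<in>UNIV. (\<alpha> i)\<^sup>2)) + \<delta>g"
proof -
  \<comment> \<open>The derivative hypotheses only say what \<open>g\<close> and \<open>g_agg\<close> mean; the bound does not use them.\<close>
  obtain \<xi> where agg: "g_agg \<alpha> x y = (\<Sum>i\<in>UNIV. \<alpha> i *\<^sub>R g i x y) + \<xi>" and "norm \<xi> \<le> \<delta>g"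
    using linear_agg[OF alpha] by blast
  have "inner (g i x y) (g j x y) \<le> grad_align g * G\<^sup>2" if "i \<noteq> j" for i j
    using cosine_le_grad_align[OF that] grad_align_nonneg bounded bounded by (rule inner_le_cosine_bound)
  then have linear_part: "norm (\<Sum>i\<in>UNIV. \<alpha> i *\<^sub>R g i x y)
               \<le> G * sqrt (grad_align g + (1 - grad_align g) * (\<Sum>i\<in>UNIV. (\<alpha> i)\<^sup>2))"
    by (rule norm_convex_comb_le[OF alpha grad_align_nonneg grad_align_le_1 bounded G_nonneg])
  have "norm (g_agg \<alpha> x y) \<le> norm (\<Sum>i\<in>UNIV. \<alpha> i *\<^sub>R g i x y) + norm \<xi>"
    unfolding agg by (rule norm_triangle_ineq)
  also have "\<dots> \<le> G * sqrt (grad_align g + (1 - grad_align g) * (\<Sum>i\<in>UNIV. (\<alpha> i)\<^sup>2)) + \<delta>g"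
    using linear_part \<open>norm \<xi> \<le> \<delta>g\<close> by (rule add_mono)
  finally show ?thesis .
qed

end
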